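(* Let $\psi\in C([0,1])$ satisfy $\psi(0)<0$, $\psi(1)<0$, and $\psi(x_0)>0$ for some $x_0\in(0,1)$. Then $$\inf_{u\in M(\psi)}\mathcal{E}(u)\le c_p(G)^p.$$
   Context: Fix $p\in(1,\infty)$. $G \in C^\infty(\mathbb{R})$ is odd, $\dot G>0$, and $s\mapsto s\dot G(s)$ belongs to $L^1(\mathbb{R})$. $c_p(G) := 2\lim_{s\to\infty}G(s)$. $M(\psi) := \{ v \in W^{2,p}(0,1)\cap W^{1,p}_0(0,1) : v \ge \psi \text{ on } [0,1]\}$ and $\mathcal{E}(u) := \int_0^1 |(G(u'))'|^p\,dx$. *)

theory Defs
  imports "HOL-Analysis.Analysis"
begin

text \<open>Functions on [0,1] are represented by functions real => real; values outside
  [0,1] are irrelevant. In one dimension, v in W^{2,p}(0,1) means (for its continuous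
  representative): v is differentiable on [0,1] with derivative v1, v1 is absolutely
  continuous, i.e. v1 x = v1 0 + int_0^x w, with w in L^p(0,1).\<close>

definition W2p :: "real \<Rightarrow> (real \<Rightarrow> real) \<Rightarrow> bool" where
  "W2p p v \<longleftrightarrow> (\<exists>v1 w.
      (\<forall>x\<in>{0..1}. (v has_real_derivative v1 x) (at x within {0..1})) \<and>
      set_integrable lborel {0..1::real} w \<and>
      set_integrable lborel {0..1::real} (\<lambda>x. \<bar>w x\<bar> powr p) \<and>
      (\<forall>x\<in>{0..1}. v1 x = v1 0 + integral {0..x} w))"

definition obstacle_set :: "real \<Rightarrow> (real \<Rightarrow> real) \<Rightarrow> (real \<Rightarrow> real) set" where
  "obstacle_set p \<psi> = {v. W2p p v \<and> v 0 = 0 \<and> v 1 = 0 \<and> (\<forall>x\<in>{0..1}. v x \<ge> \<psi> x)}"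

definition deriv01 :: "(real \<Rightarrow> real) \<Rightarrow> real \<Rightarrow> real" where
  "deriv01 u x = (SOME d. (u has_real_derivative d) (at x within {0..1}))"

text \<open>Weak derivative of the absolutely continuous function f on [0,1]
  (unique up to null sets, so integrals of it are well defined).\<close>
definition weak_deriv01 :: "(real \<Rightarrow> real) \<Rightarrow> real \<Rightarrow> real" where
  "weak_deriv01 f = (SOME h. set_integrable lborel {0..1::real} h \<and>
      (\<forall>x\<in>{0..1}. f x = f 0 + integral {0..x} h))"

definition energy :: "(real \<Rightarrow> real) \<Rightarrow> real \<Rightarrow> (real \<Rightarrow> real) \<Rightarrow> real" where
  "energy G p u = (LINT x:{0..1}|lborel. \<bar>weak_deriv01 (\<lambda>y. G (deriv01 u y)) x\<bar> powr p)"

definition cpG :: "(real \<Rightarrow> real) \<Rightarrow> real" where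
  "cpG G = 2 * Lim at_top G"

end

theory Submission
  imports Defs
begin

(* For 0 < \<delta> < 1/2 and B > 0 let g be the ramp that equals G(B) on [0,\<delta>], -G(B) on [1-\<delta>,1]
   and is affine in between, and let u(x) = int_0^x G^-1(g). Then G(u') = g, so (G(u'))' is
   -2G(B)/(1-2\<delta>) on (\<delta>,1-\<delta>) and 0 elsewhere, and E(u) = (1-2\<delta>)(2G(B)/(1-2\<delta>))^p
   <= (c_p(G)/(1-2\<delta>))^p. Oddness of G makes u' antisymmetric about 1/2, whence u(1) = 0,
   u >= 0 and u >= \<delta>B on [\<delta>,1-\<delta>]. As \<psi> < 0 near 0 and 1, taking B large puts u into
   M(\<psi>), and \<delta> -> 0 gives the bound. The integrability of s G'(s) only serves to make G
   bounded, i.e. c_p(G) finite. *)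

lemma AE_zero_if_integral_greaterThan_zero:
  fixes d :: "real \<Rightarrow> real"
  assumes d: "integrable lborel d"
    and zero: "\<And>y. (\<integral>t. indicator {y<..} t * d t \<partial>lborel) = 0"
  shows "AE t in lborel. d t = 0"
proof -
  have [measurable]: "d \<in> borel_measurable borel"
    using d by auto
  have densities: "density lborel (\<lambda>t. ennreal (d t)) = density lborel (\<lambda>t. ennreal (- d t))"
  proof (rule measure_eqI_lessThan)
    fix y :: real
    define e where "e t = indicator {y<..} t * d t" for t
    have e: "integrable lborel e"
      unfolding e_def using integrable_mult_indicator[OF _ d, of "{y<..}"] by simp
    have emeasure_density: "emeasure (density lborel (\<lambda>t. ennreal (s * d t))) {y<..} =
        (\<integral>\<^sup>+t. ennreal (s * e t) \<partial>lborel)" for s :: real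
      by (subst emeasure_density) (auto intro!: nn_integral_cong simp: e_def indicator_def)
    have finite: "(\<integral>\<^sup>+t. ennreal (e t) \<partial>lborel) < \<infinity>"
      "(\<integral>\<^sup>+t. ennreal (- e t) \<partial>lborel) < \<infinity>"
      using e unfolding real_integrable_def by (auto simp: less_top)
    moreover have "enn2real (\<integral>\<^sup>+t. ennreal (e t) \<partial>lborel) = enn2real (\<integral>\<^sup>+t. ennreal (- e t) \<partial>lborel)"
      using real_lebesgue_integral_def[OF e] zero[of y] unfolding e_def by simp
    ultimately have "(\<integral>\<^sup>+t. ennreal (e t) \<partial>lborel) = (\<integral>\<^sup>+t. ennreal (- e t) \<partial>lborel)"
      using ennreal_enn2real by fastforce
    then show "emeasure (density lborel (\<lambda>t. ennreal (d t))) {y<..} =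
        emeasure (density lborel (\<lambda>t. ennreal (- d t))) {y<..}"
      using emeasure_density[of 1] emeasure_density[of "-1"] by simp
    show "emeasure (density lborel (\<lambda>t. ennreal (d t))) {y<..} < \<infinity>"
      using emeasure_density[of 1] finite by simp
  qed simp_all
  have "AE t in lborel. ennreal (d t) = ennreal (- d t)"
    by (rule sigma_finite_measure.density_unique[OF sigma_finite_lborel _ _ densities]) measurable
  then show ?thesis
    by (rule eventually_mono) (smt (verit) ennreal_eq_0_iff)
qed

lemma AE_eq_if_indefinite_integrals_eq:
  fixes h1 h2 :: "real \<Rightarrow> real"
  assumes "a \<le> b"
    and h1: "set_integrable lborel {a..b} h1" and h2: "set_integrable lborel {a..b} h2"
    and eq: "\<And>x. x \<in> {a..b} \<Longrightarrow> integral {a..x} h1 = integral {a..x} h2"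
  shows "AE t in lborel. t \<in> {a..b} \<longrightarrow> h1 t = h2 t"
proof -
  define d where "d t = indicator {a..b} t * (h1 t - h2 t)" for t
  have d: "integrable lborel d"
    using set_integral_diff(1)[OF h1 h2] unfolding set_integrable_def d_def by simp
  have initial: "(\<integral>t. indicator {a..x} t * d t \<partial>lborel) = 0" if x: "x \<in> {a..b}" for x
  proof -
    have sub: "{a..x} \<subseteq> {a..b}"
      using x by auto
    have j1: "set_integrable lborel {a..x} h1" and j2: "set_integrable lborel {a..x} h2"
      using set_integrable_subset[OF h1 _ sub] set_integrable_subset[OF h2 _ sub] by auto
    have "(\<integral>t. indicator {a..x} t * d t \<partial>lborel) = (LINT t:{a..x}|lborel. h1 t - h2 t)"
      using sub
      by (auto simp: d_def indicator_def set_lebesgue_integral_def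
          intro!: Bochner_Integration.integral_cong)
    also have "\<dots> = integral {a..x} h1 - integral {a..x} h2"
      using set_integral_diff(2)[OF j1 j2]
      by (simp add: set_borel_integral_eq_integral(2)[OF j1] set_borel_integral_eq_integral(2)[OF j2])
    finally show ?thesis
      using eq[OF x] by simp
  qed
  have indicator_d: "integrable lborel (\<lambda>t. indicator A t * d t)" if "A \<in> sets borel" for A
    using integrable_mult_indicator[OF _ d, of A] that by simp
  have "(\<integral>t. indicator {y<..} t * d t \<partial>lborel) = 0" for y
  proof -
    consider "y < a" | "y \<in> {a..b}" | "b < y"
      by fastforce
    then show ?thesis
    proof cases
      case 1
      then have "(\<lambda>t. indicator {y<..} t * d t) = (\<lambda>t. indicator {a..b} t * d t)"
        by (auto simp: d_def indicator_def)
      then show ?thesis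
        using initial[of b] \<open>a \<le> b\<close> by simp
    next
      case 2
      then have "(\<lambda>t. indicator {y<..} t * d t) =
          (\<lambda>t. indicator {a..b} t * d t - indicator {a..y} t * d t)"
        by (auto simp: d_def indicator_def)
      then show ?thesis
        using 2 initial[of b] initial[of y] indicator_d[of "{a..b}"] indicator_d[of "{a..y}"] by simp
    next
      case 3
      then have "(\<lambda>t. indicator {y<..} t * d t) = (\<lambda>t. 0)"
        by (auto simp: d_def indicator_def)
      then show ?thesis
        by simp
    qed
  qed
  then have "AE t in lborel. d t = 0"
    by (rule AE_zero_if_integral_greaterThan_zero[OF d])
  then show ?thesis
    by (rule eventually_mono) (simp add: d_def indicator_def)
qed

lemma indefinite_integral_of_bounded_piecewise_derivative:
  fixes f h :: "real \<Rightarrow> real"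
  assumes cont: "continuous_on {a..b} f" and S: "finite S"
    and deriv: "\<And>t. t \<in> {a<..<b} - S \<Longrightarrow> (f has_real_derivative h t) (at t)"
    and [measurable]: "h \<in> borel_measurable borel" and bound: "\<And>t. t \<in> {a..b} \<Longrightarrow> \<bar>h t\<bar> \<le> C"
  shows "set_integrable lborel {a..b} h"
    and "\<And>x. x \<in> {a..b} \<Longrightarrow> f x = f a + integral {a..x} h"
proof -
  show "set_integrable lborel {a..b} h"
    unfolding set_integrable_def
    by (rule integrableI_bounded_set_indicator[where B=C])
       (use bound in \<open>auto simp: emeasure_lborel_Icc_eq\<close>)
  fix x assume x: "x \<in> {a..b}"
  have "(h has_integral (f x - f a)) {a..x}"
    by (rule fundamental_theorem_of_calculus_interior_strong[OF S])
       (use x deriv in \<open>auto simp: has_real_derivative_iff_has_vector_derivative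
         intro: continuous_on_subset[OF cont]\<close>)
  then show "f x = f a + integral {a..x} h"
    by (simp add: integral_unique)
qed

lemma deriv01_eqI:
  assumes "(u has_real_derivative d) (at x within {0..1})" and "x \<in> {0..1}"
  shows "deriv01 u x = d"
proof -
  have "(u has_real_derivative deriv01 u x) (at x within {0..1})"
    unfolding deriv01_def using assms(1) by (rule someI)
  then show ?thesis
    using assms by (intro vector_derivative_unique_within_closed_interval[of 0 1 x u])
      (simp_all add: has_real_derivative_iff_has_vector_derivative)
qed

lemma deriv01_indefinite_integral:
  assumes "continuous_on {0..1} \<phi>" and "x \<in> {0..1}"
  shows "deriv01 (\<lambda>x. integral {0..x} \<phi>) x = \<phi> x"
  using assms by (intro deriv01_eqI integral_has_real_derivative)

lemma weak_deriv01:
  assumes "set_integrable lborel {0..1} h" and "\<And>x. x \<in> {0..1} \<Longrightarrow> f x = f 0 + integral {0..x} h"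
  shows "set_integrable lborel {0..1} (weak_deriv01 f)"
    and "\<And>x. x \<in> {0..1} \<Longrightarrow> f x = f 0 + integral {0..x} (weak_deriv01 f)"
proof -
  have "set_integrable lborel {0..1} (weak_deriv01 f) \<and>
      (\<forall>x\<in>{0..1}. f x = f 0 + integral {0..x} (weak_deriv01 f))"
    unfolding weak_deriv01_def by (rule someI[where x=h]) (use assms in blast)
  then show "set_integrable lborel {0..1} (weak_deriv01 f)"
    and "\<And>x. x \<in> {0..1} \<Longrightarrow> f x = f 0 + integral {0..x} (weak_deriv01 f)"
    by blast+
qed

lemma weak_deriv01_AE_eq:
  assumes h: "set_integrable lborel {0..1} h" and f: "\<And>x. x \<in> {0..1} \<Longrightarrow> f x = f 0 + integral {0..x} h"
  shows "AE t in lborel. t \<in> {0..1} \<longrightarrow> weak_deriv01 f t = h t"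
proof (rule AE_eq_if_indefinite_integrals_eq)
  show "integral {0..x} (weak_deriv01 f) = integral {0..x} h" if "x \<in> {0..1}" for x
    using weak_deriv01(2)[OF h f that] f[OF that] by simp
qed (use weak_deriv01(1)[OF h f] h in auto)

lemma W2p_indefinite_integral:
  fixes \<phi> w :: "real \<Rightarrow> real"
  assumes "0 \<le> p" and cont: "continuous_on {0..1} \<phi>" and S: "finite S"
    and deriv: "\<And>t. t \<in> {0<..<1} - S \<Longrightarrow> (\<phi> has_real_derivative w t) (at t)"
    and w[measurable]: "w \<in> borel_measurable borel" and bound: "\<And>t. t \<in> {0..1} \<Longrightarrow> \<bar>w t\<bar> \<le> C"
  shows "W2p p (\<lambda>x. integral {0..x} \<phi>)"
  unfolding W2p_def
proof (intro exI conjI ballI)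
  show "((\<lambda>x. integral {0..x} \<phi>) has_real_derivative \<phi> x) (at x within {0..1})" if "x \<in> {0..1}" for x
    using cont that by (rule integral_has_real_derivative)
  note w_integral = indefinite_integral_of_bounded_piecewise_derivative[of 0 1 \<phi> S w C]
  show "set_integrable lborel {0..1} w"
    using w_integral cont S deriv w bound by blast
  show "\<phi> x = \<phi> 0 + integral {0..x} w" if "x \<in> {0..1}" for x
    using w_integral cont S deriv w bound that by blast
  show "set_integrable lborel {0..1} (\<lambda>x. \<bar>w x\<bar> powr p)"
    unfolding set_integrable_def
    by (rule integrableI_bounded_set_indicator[where B="C powr p"])
       (use bound \<open>0 \<le> p\<close> in \<open>auto intro!: AE_I2 powr_mono2\<close>)
qed

lemma energy_eq_integral_of_piecewise_derivative:
  fixes f h :: "real \<Rightarrow> real"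
  assumes Gu: "\<And>x. x \<in> {0..1} \<Longrightarrow> G (deriv01 u x) = f x"
    and cont: "continuous_on {0..1} f" and S: "finite S"
    and deriv: "\<And>t. t \<in> {0<..<1} - S \<Longrightarrow> (f has_real_derivative h t) (at t)"
    and h_meas[measurable]: "h \<in> borel_measurable borel" and bound: "\<And>t. t \<in> {0..1} \<Longrightarrow> \<bar>h t\<bar> \<le> C"
  shows "energy G p u = (LINT x:{0..1}|lborel. \<bar>h x\<bar> powr p)"
proof -
  define F where "F y = G (deriv01 u y)" for y
  have h: "set_integrable lborel {0..1} h" "\<And>x. x \<in> {0..1} \<Longrightarrow> f x = f 0 + integral {0..x} h"
    using indefinite_integral_of_bounded_piecewise_derivative[of 0 1 f S h C] cont S deriv h_meas bound
    by blast+
  have F: "F x = F 0 + integral {0..x} h" if "x \<in> {0..1}" for x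
    using h(2)[OF that] Gu[OF that] Gu[of 0] unfolding F_def by simp
  have [measurable]: "(\<lambda>t. indicator {0..1} t * weak_deriv01 F t) \<in> borel_measurable lborel"
    using weak_deriv01(1)[OF h(1) F] unfolding set_integrable_def by (auto dest: borel_measurable_integrable)
  have "energy G p u = (\<integral>t. \<bar>indicator {0..1} t * weak_deriv01 F t\<bar> powr p \<partial>lborel)"
    unfolding energy_def F_def[symmetric] set_lebesgue_integral_def
    by (rule Bochner_Integration.integral_cong) (auto simp: indicator_def)
  also have "\<dots> = (\<integral>t. \<bar>indicator {0..1} t * h t\<bar> powr p \<partial>lborel)"
  proof (rule integral_cong_AE)
    show "AE t in lborel.
        \<bar>indicator {0..1} t * weak_deriv01 F t\<bar> powr p = \<bar>indicator {0..1} t * h t\<bar> powr p"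
      using weak_deriv01_AE_eq[OF h(1) F] by (rule eventually_mono) (auto simp: indicator_def)
  qed measurable
  also have "\<dots> = (LINT x:{0..1}|lborel. \<bar>h x\<bar> powr p)"
    unfolding set_lebesgue_integral_def
    by (rule Bochner_Integration.integral_cong) (auto simp: indicator_def)
  finally show ?thesis .
qed

lemma energy_nonneg: "0 \<le> energy G p u"
  unfolding energy_def set_lebesgue_integral_def by (rule Bochner_Integration.integral_nonneg) simp

lemma has_real_derivative_between_plateaus:
  fixes f f' :: "real \<Rightarrow> real"
  assumes left: "\<And>t. t \<le> a \<Longrightarrow> f t = c" and right: "\<And>t. b \<le> t \<Longrightarrow> f t = d"
    and mid: "\<And>t. a < t \<Longrightarrow> t < b \<Longrightarrow> (f has_real_derivative f' t) (at t)"
    and t: "t \<notin> {a, b}"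
  shows "(f has_real_derivative indicator {a<..<b} t * f' t) (at t)"
proof -
  consider "t < a" | "a < t" "t < b" | "b < t"
    using t by force
  then show ?thesis
  proof cases
    case 1
    have "((\<lambda>_. c) has_real_derivative 0) (at t)"
      by simp
    then have "(f has_real_derivative 0) (at t)"
      by (rule has_field_derivative_transform_within_open[where S="{..<a}"]) (use 1 left in auto)
    then show ?thesis
      using 1 by simp
  next
    case 2
    then show ?thesis
      using mid by simp
  next
    case 3
    have "((\<lambda>_. d) has_real_derivative 0) (at t)"
      by simp
    then have "(f has_real_derivative 0) (at t)"
      by (rule has_field_derivative_transform_within_open[where S="{b<..}"]) (use 3 right in auto)
    then show ?thesis
      using 3 by simp
  qed
qed

lemma indefinite_integral_reflect:
  fixes \<phi> :: "real \<Rightarrow> real"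
  assumes cont: "continuous_on {0..1} \<phi>" and odd: "\<And>t. t \<in> {0..1} \<Longrightarrow> \<phi> (1 - t) = - \<phi> t"
    and x: "x \<in> {0..1}"
  shows "integral {0..1 - x} \<phi> = integral {0..x} \<phi>"
proof -
  define U where "U x = integral {0..x} \<phi>" for x
  define V where "V x = U x - U (1 - x)" for x
  have U: "(U has_real_derivative \<phi> x) (at x within {0..1})" if "x \<in> {0..1}" for x
    unfolding U_def using cont that by (rule integral_has_real_derivative)
  have reflect: "(\<lambda>x. 1 - x) ` {0..1} = {0..1::real}"
    by (auto simp: image_iff intro!: bexI[where x="1 - _"])
  have "(V has_real_derivative 0) (at x within {0..1})" if x: "x \<in> {0..1}" for x
  proof -
    have "(U has_real_derivative \<phi> (1 - x)) (at (1 - x) within (\<lambda>x. 1 - x) ` {0..1})"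
      unfolding reflect using U x by simp
    moreover have "((\<lambda>x. 1 - x) has_real_derivative -1) (at x within {0..1})"
      by (auto intro!: derivative_eq_intros)
    ultimately have "(U \<circ> (\<lambda>x. 1 - x) has_real_derivative \<phi> (1 - x) * -1) (at x within {0..1})"
      by (rule DERIV_image_chain)
    then have "(V has_real_derivative \<phi> x - \<phi> (1 - x) * -1) (at x within {0..1})"
      unfolding V_def o_def using U[OF x] by (intro DERIV_diff)
    then show ?thesis
      using odd[OF x] by simp
  qed
  then obtain k where "\<And>x. x \<in> {0..1} \<Longrightarrow> V x = k"
    using has_field_derivative_zero_constant[of "{0..1::real}" V] by auto
  then have "V x = V 0" and "V 1 = V 0"
    using x by auto
  then show ?thesis
    by (simp add: V_def U_def)
qed

lemma negative_near_endpoints: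
  fixes \<psi> :: "real \<Rightarrow> real"
  assumes cont: "continuous_on {0..1} \<psi>" and "\<psi> 0 < 0" "\<psi> 1 < 0"
  obtains a where "0 < a" "\<And>x. x \<in> {0..1} \<Longrightarrow> x < a \<or> 1 - a < x \<Longrightarrow> \<psi> x < 0"
proof -
  have negative_nearby: "\<exists>d>0. \<forall>x\<in>{0..1}. dist x y < d \<longrightarrow> \<psi> x < 0"
    if "y \<in> {0..1}" "\<psi> y < 0" for y
  proof -
    have "\<forall>e>0. \<exists>d>0. \<forall>x\<in>{0..1}. dist x y < d \<longrightarrow> dist (\<psi> x) (\<psi> y) < e"
      using cont that(1) unfolding continuous_on_iff by blast
    moreover have "0 < - \<psi> y"
      using that(2) by simp
    ultimately obtain d where "d > 0" "\<forall>x\<in>{0..1}. dist x y < d \<longrightarrow> dist (\<psi> x) (\<psi> y) < - \<psi> y"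
      by blast
    then show ?thesis
      by (intro exI[of _ d]) (auto simp: dist_real_def abs_less_iff)
  qed
  obtain d0 where "d0 > 0" "\<forall>x\<in>{0..1}. dist x 0 < d0 \<longrightarrow> \<psi> x < 0"
    using negative_nearby[of 0] assms by auto
  moreover obtain d1 where "d1 > 0" "\<forall>x\<in>{0..1}. dist x 1 < d1 \<longrightarrow> \<psi> x < 0"
    using negative_nearby[of 1] assms by auto
  ultimately show thesis
    by (intro that[of "min d0 d1"]) (auto simp: dist_real_def)
qed

definition ramp :: "real \<Rightarrow> real \<Rightarrow> real \<Rightarrow> real" where
  "ramp A \<delta> t = A * max (-1) (min 1 ((1 - 2 * t) / (1 - 2 * \<delta>)))"

lemma ramp_reflect: "ramp A \<delta> (1 - t) = - ramp A \<delta> t"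
proof -
  have "(1 - 2 * (1 - t)) / (1 - 2 * \<delta>) = - ((1 - 2 * t) / (1 - 2 * \<delta>))"
    using divide_minus_left[of "1 - 2 * t" "1 - 2 * \<delta>"] by simp
  then show ?thesis
    by (auto simp: ramp_def max_def min_def)
qed

lemma continuous_ramp: "continuous_on S (ramp A \<delta>)"
  unfolding ramp_def divide_inverse by (intro continuous_intros)

context
  fixes A \<delta> :: real
  assumes A: "0 \<le> A" and \<delta>: "\<delta> < 1/2"
begin

lemma ramp_bounds: "-A \<le> ramp A \<delta> t \<and> ramp A \<delta> t \<le> A"
proof -
  define c where "c = max (-1) (min 1 ((1 - 2 * t) / (1 - 2 * \<delta>)))"
  have "-1 \<le> c" "c \<le> 1"
    by (auto simp: c_def)
  then show ?thesis
    using mult_left_mono[of c 1 A] mult_left_mono[of "-1" c A] A by (simp add: ramp_def c_def)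
qed

lemma ramp_left: "t \<le> \<delta> \<Longrightarrow> ramp A \<delta> t = A"
  using \<delta> by (simp add: ramp_def)

lemma ramp_right: "1 - \<delta> \<le> t \<Longrightarrow> ramp A \<delta> t = -A"
  using ramp_left[of "1 - t"] ramp_reflect[of A \<delta> t] by simp

lemma ramp_mid:
  assumes "\<delta> \<le> t" "t \<le> 1 - \<delta>"
  shows "ramp A \<delta> t = A * (1 - 2 * t) / (1 - 2 * \<delta>)"
proof -
  have "-1 \<le> (1 - 2 * t) / (1 - 2 * \<delta>)" "(1 - 2 * t) / (1 - 2 * \<delta>) \<le> 1"
    using assms \<delta> by (simp_all add: field_simps)
  then show ?thesis
    by (simp add: ramp_def)
qed

lemma ramp_nonneg:
  assumes "t \<le> 1/2"
  shows "0 \<le> ramp A \<delta> t"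
proof -
  have "0 \<le> (1 - 2 * t) / (1 - 2 * \<delta>)"
    using assms \<delta> by (simp add: divide_nonneg_pos)
  then show ?thesis
    using A by (simp add: ramp_def)
qed

lemma ramp_has_derivative:
  "t \<notin> {\<delta>, 1 - \<delta>} \<Longrightarrow>
    (ramp A \<delta> has_real_derivative indicator {\<delta><..<1 - \<delta>} t * (- 2 * A / (1 - 2 * \<delta>))) (at t)"
proof (rule has_real_derivative_between_plateaus[OF ramp_left ramp_right])
  fix t assume t: "\<delta> < t" "t < 1 - \<delta>"
  have "((\<lambda>t. A * (1 - 2 * t) / (1 - 2 * \<delta>)) has_real_derivative - 2 * A / (1 - 2 * \<delta>)) (at t)"
    using \<delta> by (auto intro!: derivative_eq_intros)
  then show "(ramp A \<delta> has_real_derivative - 2 * A / (1 - 2 * \<delta>)) (at t)"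
    by (rule has_field_derivative_transform_within_open[where S="{\<delta><..<1 - \<delta>}"])
       (use t in \<open>auto simp: ramp_mid\<close>)
qed

end

locale C1_increasing =
  fixes G :: "real \<Rightarrow> real"
  assumes has_deriv: "\<And>x. (G has_real_derivative deriv G x) (at x)"
    and continuous_deriv: "continuous_on UNIV (deriv G)"
    and deriv_pos: "\<And>x. 0 < deriv G x"
begin

lemma deriv_nonzero [simp]: "deriv G x \<noteq> 0"
  using deriv_pos[of x] by simp

lemma isCont: "isCont G x"
  using has_deriv by (rule DERIV_isCont)

lemma strict_mono: "strict_mono G"
proof (rule strict_monoI)
  fix x y :: real
  assume "x < y"
  then show "G x < G y"
    by (rule DERIV_pos_imp_increasing) (use has_deriv deriv_pos in blast)
qed

lemma less_iff [simp]: "G x < G y \<longleftrightarrow> x < y"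
  using strict_mono by (rule strict_mono_less)

lemma le_iff [simp]: "G x \<le> G y \<longleftrightarrow> x \<le> y"
  using strict_mono by (rule strict_mono_less_eq)

lemma inv_G [simp]: "inv G (G x) = x"
  using strict_mono by (simp add: strict_mono_imp_inj_on inv_f_f)

lemma G_inv [simp]: "y \<in> range G \<Longrightarrow> G (inv G y) = y"
  by (rule f_inv_into_f)

lemma in_range:
  assumes "G a \<le> y" "y \<le> G b"
  shows "y \<in> range G"
proof -
  have "a \<le> b"
    using assms by (metis le_iff order_trans)
  then obtain x where "G x = y"
    using IVT'[of G a y b] assms isCont by (auto simp: continuous_at_imp_continuous_on)
  then show ?thesis
    by blast
qed

lemma isCont_inv:
  assumes "y \<in> range G"
  shows "isCont (inv G) y"
proof -
  obtain x where y: "y = G x"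
    using assms by blast
  have "isCont (inv G) (G x)"
    by (rule isCont_inverse_function[where d=1]) (auto simp: isCont)
  then show ?thesis
    using y by simp
qed

lemma inv_has_deriv:
  assumes "y \<in> range G"
  shows "(inv G has_real_derivative inverse (deriv G (inv G y))) (at y)"
proof -
  obtain x where y: "y = G x"
    using assms by blast
  show ?thesis
  proof (rule DERIV_inverse_function[where a="G (x - 1)" and b="G (x + 1)"])
    show "G (x - 1) < y" "y < G (x + 1)"
      using y by simp_all
    show "G (inv G z) = z" if "G (x - 1) < z" "z < G (x + 1)" for z
      using that in_range[of "x - 1" z "x + 1"] by simp
  qed (use has_deriv deriv_pos[of "inv G y"] isCont_inv assms in auto)
qed

lemma le_integral_mult_deriv:
  assumes int: "integrable lborel (\<lambda>s. s * deriv G s)"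
  shows "G s \<le> G 1 + (\<integral>t. \<bar>t * deriv G t\<bar> \<partial>lborel)"
proof (cases "s \<le> 1")
  case True
  then show ?thesis
    by (simp add: add_increasing2)
next
  case False
  have ftc: "(deriv G has_integral (G s - G 1)) {1..s}"
    using False has_deriv
    by (intro fundamental_theorem_of_calculus)
       (auto simp: has_real_derivative_iff_has_vector_derivative[symmetric]
         intro: has_field_derivative_at_within)
  have si: "set_integrable lborel {1..s} (\<lambda>t. t * deriv G t)"
    unfolding set_integrable_def using integrable_mult_indicator[OF _ int, of "{1..s}"] by simp
  have "G s - G 1 = integral {1..s} (deriv G)"
    using ftc by (simp add: integral_unique)
  also have "\<dots> \<le> integral {1..s} (\<lambda>t. t * deriv G t)"
  proof (rule integral_le)
    show "(\<lambda>t. t * deriv G t) integrable_on {1..s}"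
      using continuous_deriv
      by (intro integrable_continuous_interval continuous_intros) (auto intro: continuous_on_subset)
    show "deriv G t \<le> t * deriv G t" if "t \<in> {1..s}" for t
      using that mult_right_mono[of 1 t "deriv G t"] deriv_pos[of t] by auto
  qed (use ftc in blast)
  also have "\<dots> = (LINT t:{1..s}|lborel. t * deriv G t)"
    using set_borel_integral_eq_integral(2)[OF si] by simp
  also have "\<dots> \<le> (\<integral>t. \<bar>t * deriv G t\<bar> \<partial>lborel)"
    unfolding set_lebesgue_integral_def
    using si integrable_abs[OF int] unfolding set_integrable_def
    by (intro integral_mono) (auto simp: indicator_def)
  finally show ?thesis
    by simp
qed

lemma tendsto_Sup_range:
  assumes bdd: "bdd_above (range G)"
  shows "(G \<longlongrightarrow> Sup (range G)) at_top"
proof (rule increasing_tendsto)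
  show "\<forall>\<^sub>F x in at_top. G x \<le> Sup (range G)"
    using cSUP_upper[OF UNIV_I bdd] by simp
  fix y assume "y < Sup (range G)"
  then obtain s where s: "y < G s"
    using less_cSup_iff[of "range G" y] bdd by auto
  show "\<forall>\<^sub>F x in at_top. y < G x"
    using eventually_ge_at_top[of s] by eventually_elim (use s in \<open>simp add: less_le_trans\<close>)
qed

end

locale odd_C1_increasing = C1_increasing +
  assumes odd: "\<And>x. G (- x) = - G x"
begin

lemma G_0 [simp]: "G 0 = 0"
  using odd[of 0] by simp

lemma inv_odd:
  assumes "y \<in> range G"
  shows "inv G (- y) = - inv G y"
proof -
  obtain x where "y = G x"
    using assms by blast
  then show ?thesis
    using inv_G[of "- x"] by (simp add: odd)
qed

definition profile :: "real \<Rightarrow> real \<Rightarrow> real \<Rightarrow> real" where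
  "profile B \<delta> t = inv G (ramp (G B) \<delta> t)"

definition competitor :: "real \<Rightarrow> real \<Rightarrow> real \<Rightarrow> real" where
  "competitor B \<delta> x = integral {0..x} (profile B \<delta>)"

context
  fixes B \<delta> :: real
  assumes B: "0 < B" and \<delta>: "0 < \<delta>" "\<delta> < 1/2"
begin

lemma G_B_nonneg: "0 \<le> G B"
  using B by (metis G_0 le_iff less_imp_le)

lemma ramp_in_range: "ramp (G B) \<delta> t \<in> range G"
  using ramp_bounds[OF G_B_nonneg \<delta>(2), of t] by (intro in_range[of "- B" _ B]) (simp_all add: odd)

lemma G_profile: "G (profile B \<delta> t) = ramp (G B) \<delta> t"
  using ramp_in_range by (simp add: profile_def)

lemma profile_left: "t \<le> \<delta> \<Longrightarrow> profile B \<delta> t = B"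
  by (simp add: profile_def ramp_left[OF G_B_nonneg \<delta>(2)])

lemma profile_reflect: "profile B \<delta> (1 - t) = - profile B \<delta> t"
  using ramp_in_range by (simp add: profile_def ramp_reflect inv_odd)

lemma profile_nonneg:
  assumes "t \<le> 1/2"
  shows "0 \<le> profile B \<delta> t"
proof -
  have "G 0 \<le> G (profile B \<delta> t)"
    using ramp_nonneg[OF G_B_nonneg \<delta>(2) assms] by (simp add: G_profile)
  then show ?thesis
    using le_iff[of 0 "profile B \<delta> t"] by simp
qed

lemma continuous_profile: "continuous_on S (profile B \<delta>)"
proof -
  have "isCont (ramp (G B) \<delta>) t" for t
    using continuous_ramp[of UNIV "G B" \<delta>] by (simp add: continuous_on_eq_continuous_at)
  then have "isCont (\<lambda>t. inv G (ramp (G B) \<delta> t)) t" for t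
    by (rule isCont_o2) (rule isCont_inv[OF ramp_in_range])
  then have "isCont (profile B \<delta>) t" for t
    by (simp add: profile_def[abs_def])
  then show ?thesis
    by (simp add: continuous_at_imp_continuous_on)
qed

lemma profile_has_derivative:
  assumes "t \<notin> {\<delta>, 1 - \<delta>}"
  shows "(profile B \<delta> has_real_derivative
      indicator {\<delta><..<1 - \<delta>} t * (- 2 * G B / (1 - 2 * \<delta>)) / deriv G (profile B \<delta> t)) (at t)"
proof -
  have "profile B \<delta> = (\<lambda>t. inv G (ramp (G B) \<delta> t))"
    by (simp add: fun_eq_iff profile_def)
  then have "(profile B \<delta> has_real_derivative inverse (deriv G (profile B \<delta> t)) *
      (indicator {\<delta><..<1 - \<delta>} t * (- 2 * G B / (1 - 2 * \<delta>)))) (at t)"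
    using DERIV_chain2[OF inv_has_deriv[OF ramp_in_range]
        ramp_has_derivative[OF G_B_nonneg \<delta>(2) assms]]
    by simp
  then show ?thesis
    by (simp add: divide_inverse ac_simps)
qed

lemma W2p_competitor:
  assumes "0 \<le> p"
  shows "W2p p (competitor B \<delta>)"
proof -
  define c where "c t = - 2 * G B / (1 - 2 * \<delta>) / deriv G (profile B \<delta> t)" for t
  have "continuous_on UNIV (\<lambda>t. deriv G (profile B \<delta> t))"
    using continuous_on_compose2[OF continuous_deriv continuous_profile] by simp
  then have c: "continuous_on UNIV c"
    unfolding c_def by (intro continuous_intros) simp_all
  have "continuous_on {0..1} (\<lambda>t. \<bar>c t\<bar>)"
    using continuous_on_subset[OF c] by (intro continuous_intros) auto
  then obtain t0 where "\<forall>t\<in>{0..1}. \<bar>c t\<bar> \<le> \<bar>c t0\<bar>"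
    using continuous_attains_sup[OF compact_Icc, of 0 1 "\<lambda>t. \<bar>c t\<bar>"] by auto
  then have bound: "\<bar>indicator {\<delta><..<1 - \<delta>} t * c t\<bar> \<le> \<bar>c t0\<bar>" if "t \<in> {0..1}" for t
    using that by (simp add: indicator_def)
  have meas: "(\<lambda>t. indicator {\<delta><..<1 - \<delta>} t * c t) \<in> borel_measurable borel"
    using borel_measurable_continuous_onI[OF c] by measurable
  show ?thesis
    unfolding competitor_def
  proof (rule W2p_indefinite_integral[where S="{\<delta>, 1 - \<delta>}"])
    show "(profile B \<delta> has_real_derivative indicator {\<delta><..<1 - \<delta>} t * c t) (at t)"
      if "t \<in> {0<..<1} - {\<delta>, 1 - \<delta>}" for t
      using profile_has_derivative[of t] that by (simp add: c_def)
  qed (use assms continuous_profile meas bound in auto)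
qed

lemma competitor_reflect: "x \<in> {0..1} \<Longrightarrow> competitor B \<delta> (1 - x) = competitor B \<delta> x"
  unfolding competitor_def using continuous_profile profile_reflect by (rule indefinite_integral_reflect)

lemma competitor_0: "competitor B \<delta> 0 = 0"
  by (simp add: competitor_def)

lemma competitor_1: "competitor B \<delta> 1 = 0"
  using competitor_reflect[of 0] by (simp add: competitor_0)

lemma competitor_lower_bound_half:
  assumes "0 \<le> x" "x \<le> 1/2"
  shows "min x \<delta> * B \<le> competitor B \<delta> x"
proof -
  have integrable: "profile B \<delta> integrable_on {a..b}" for a b
    using continuous_profile by (rule integrable_continuous_interval)
  have "competitor B \<delta> x =
      integral {0..min x \<delta>} (profile B \<delta>) + integral {min x \<delta>..x} (profile B \<delta>)"
    unfolding competitor_def using assms \<delta> integrable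
    by (intro Henstock_Kurzweil_Integration.integral_combine[symmetric]) auto
  moreover have "integral {0..min x \<delta>} (profile B \<delta>) = integral {0..min x \<delta>} (\<lambda>_. B)"
    by (rule integral_cong) (simp add: profile_left)
  moreover have "0 \<le> integral {min x \<delta>..x} (profile B \<delta>)"
    using assms integrable profile_nonneg by (intro Henstock_Kurzweil_Integration.integral_nonneg) auto
  ultimately show ?thesis
    using assms \<delta> by simp
qed

lemma competitor_nonneg: "x \<in> {0..1} \<Longrightarrow> 0 \<le> competitor B \<delta> x"
  using competitor_lower_bound_half[of x] competitor_lower_bound_half[of "1 - x"] competitor_reflect[of x] B \<delta>
  by (cases "x \<le> 1/2") (auto intro: order_trans[rotated])

lemma competitor_lower_bound: "x \<in> {\<delta>..1 - \<delta>} \<Longrightarrow> \<delta> * B \<le> competitor B \<delta> x"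
  using competitor_lower_bound_half[of x] competitor_lower_bound_half[of "1 - x"] competitor_reflect[of x] \<delta>
  by (cases "x \<le> 1/2") auto

lemma energy_competitor: "energy G p (competitor B \<delta>) \<le> (2 * G B / (1 - 2 * \<delta>)) powr p"
proof -
  define m where "m = 2 * G B / (1 - 2 * \<delta>)"
  have m: "0 \<le> m"
    using G_B_nonneg \<delta> by (simp add: m_def)
  have "energy G p (competitor B \<delta>) =
      (LINT t:{0..1}|lborel. \<bar>indicator {\<delta><..<1 - \<delta>} t * - m\<bar> powr p)"
  proof (rule energy_eq_integral_of_piecewise_derivative[where S="{\<delta>, 1 - \<delta>}" and C=m])
    show "G (deriv01 (competitor B \<delta>) x) = ramp (G B) \<delta> x" if "x \<in> {0..1}" for x
      unfolding competitor_def using deriv01_indefinite_integral[OF continuous_profile that]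
      by (simp add: G_profile)
    show "(ramp (G B) \<delta> has_real_derivative indicator {\<delta><..<1 - \<delta>} t * - m) (at t)"
      if "t \<in> {0<..<1} - {\<delta>, 1 - \<delta>}" for t
      using ramp_has_derivative[OF G_B_nonneg \<delta>(2), of t] that by (simp add: m_def)
  qed (use m in \<open>auto simp: continuous_ramp indicator_def\<close>)
  also have "\<dots> = (\<integral>t. indicator {\<delta><..<1 - \<delta>} t * m powr p \<partial>lborel)"
    unfolding set_lebesgue_integral_def using m \<delta>
    by (intro Bochner_Integration.integral_cong) (auto simp: indicator_def)
  also have "\<dots> = (1 - 2 * \<delta>) * m powr p"
    using \<delta> by simp
  also have "\<dots> \<le> m powr p"
    using \<delta> by (intro mult_left_le_one_le) auto
  finally show ?thesis
    by (simp add: m_def)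
qed

lemma competitor_in_obstacle_set:
  assumes "0 \<le> p"
    and outer: "\<And>x. x \<in> {0..1} \<Longrightarrow> x \<notin> {\<delta>..1 - \<delta>} \<Longrightarrow> \<psi> x \<le> 0"
    and inner: "\<And>x. x \<in> {\<delta>..1 - \<delta>} \<Longrightarrow> \<psi> x \<le> \<delta> * B"
  shows "competitor B \<delta> \<in> obstacle_set p \<psi>"
  unfolding obstacle_set_def
proof (intro CollectI conjI ballI W2p_competitor assms competitor_0 competitor_1)
  fix x :: real
  assume x: "x \<in> {0..1}"
  show "\<psi> x \<le> competitor B \<delta> x"
  proof (cases "x \<in> {\<delta>..1 - \<delta>}")
    case True
    then show ?thesis
      using inner competitor_lower_bound order_trans by blast
  next
    case False
    then show ?thesis
      using outer[OF x] competitor_nonneg[OF x] by linarith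
  qed
qed

end

lemma INF_energy_le_delta:
  assumes p: "0 \<le> p" and le_L: "\<And>x. G x \<le> L" and \<delta>: "0 < \<delta>" "\<delta> < 1/2"
    and outer: "\<And>x. x \<in> {0..1} \<Longrightarrow> x < \<delta> \<or> 1 - \<delta> < x \<Longrightarrow> \<psi> x \<le> 0"
    and K: "\<And>x. x \<in> {0..1} \<Longrightarrow> \<psi> x \<le> K"
  shows "(INF u\<in>obstacle_set p \<psi>. energy G p u) \<le> (2 * L / (1 - 2 * \<delta>)) powr p"
proof -
  define B where "B = max K 0 / \<delta> + 1"
  have B: "0 < B"
    using \<delta> by (simp add: B_def add_nonneg_pos)
  have "\<delta> * B = max K 0 + \<delta>"
    using \<delta> by (simp add: B_def algebra_simps)
  then have "K \<le> \<delta> * B"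
    using \<delta> max.cobounded1[of K 0] by linarith
  have u: "competitor B \<delta> \<in> obstacle_set p \<psi>"
  proof (rule competitor_in_obstacle_set[OF B \<delta> p])
    show "\<psi> x \<le> 0" if "x \<in> {0..1}" "x \<notin> {\<delta>..1 - \<delta>}" for x
      using that outer[of x] by auto
    show "\<psi> x \<le> \<delta> * B" if "x \<in> {\<delta>..1 - \<delta>}" for x
      using that \<delta> K[of x] \<open>K \<le> \<delta> * B\<close> by auto
  qed
  have "bdd_below (energy G p ` obstacle_set p \<psi>)"
    using energy_nonneg by (intro bdd_belowI) auto
  then have "(INF u\<in>obstacle_set p \<psi>. energy G p u) \<le> energy G p (competitor B \<delta>)"
    using u by (rule cINF_lower)
  also have "\<dots> \<le> (2 * G B / (1 - 2 * \<delta>)) powr p"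
    using B \<delta> by (rule energy_competitor)
  also have "\<dots> \<le> (2 * L / (1 - 2 * \<delta>)) powr p"
    using p \<delta> le_L[of B] G_B_nonneg[OF B \<delta>] by (intro powr_mono2 divide_right_mono) simp_all
  finally show ?thesis .
qed

lemma INF_energy_le:
  assumes p: "0 \<le> p" and le_L: "\<And>x. G x \<le> L"
    and a: "0 < a" and outer: "\<And>x. x \<in> {0..1} \<Longrightarrow> x < a \<or> 1 - a < x \<Longrightarrow> \<psi> x \<le> 0"
    and K: "\<And>x. x \<in> {0..1} \<Longrightarrow> \<psi> x \<le> K"
  shows "(INF u\<in>obstacle_set p \<psi>. energy G p u) \<le> (2 * L) powr p"
proof (rule field_le_epsilon)
  fix \<eta> :: real
  assume "0 < \<eta>"
  have "0 < L"
    using le_L[of 1] G_0 less_iff[of 0 1] by linarith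
  then have "((\<lambda>\<delta>. (2 * L / (1 - 2 * \<delta>)) powr p) \<longlongrightarrow> (2 * L / (1 - 2 * 0)) powr p) (at_right 0)"
    by (intro tendsto_intros) auto
  then have "\<forall>\<^sub>F \<delta> in at_right 0. (2 * L / (1 - 2 * \<delta>)) powr p < (2 * L) powr p + \<eta>"
    by (rule order_tendstoD(2)) (simp add: \<open>0 < \<eta>\<close>)
  moreover have "\<forall>\<^sub>F \<delta> in at_right 0. \<delta> < min a (1/2)"
    using a unfolding eventually_at_right_field by (intro exI[of _ "min a (1/2)"]) auto
  ultimately have "\<forall>\<^sub>F \<delta> in at_right 0. 0 < \<delta> \<and> \<delta> < min a (1/2) \<and>
      (2 * L / (1 - 2 * \<delta>)) powr p < (2 * L) powr p + \<eta>"
    using eventually_at_right_less by eventually_elim blast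
  then obtain \<delta> where \<delta>: "0 < \<delta>" "\<delta> < a" "\<delta> < 1/2"
    and small: "(2 * L / (1 - 2 * \<delta>)) powr p < (2 * L) powr p + \<eta>"
    using eventually_happens'[OF trivial_limit_at_right_real] by auto
  have "(INF u\<in>obstacle_set p \<psi>. energy G p u) \<le> (2 * L / (1 - 2 * \<delta>)) powr p"
    using \<delta> outer K by (intro INF_energy_le_delta[OF p le_L]) auto
  then show "(INF u\<in>obstacle_set p \<psi>. energy G p u) \<le> (2 * L) powr p + \<eta>"
    using small by simp
qed

end

theorem proposition4p1:
  fixes p :: real and G \<psi> :: "real \<Rightarrow> real" and x0 :: real
  assumes hp: "1 < p"
    and G_smooth: "\<forall>k. \<forall>x. ((deriv ^^ k) G) differentiable (at x)"
    and G_odd: "\<forall>s. G (- s) = - G s"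
    and G_pos: "\<forall>s. deriv G s > 0"
    and G_L1: "integrable lborel (\<lambda>s. s * deriv G s)"
    and psi_cont: "continuous_on {0..1} \<psi>"
    and psi0: "\<psi> 0 < 0" and psi1: "\<psi> 1 < 0"
    and x0: "x0 \<in> {0<..<1}" and psix0: "\<psi> x0 > 0"
  shows "(INF u\<in>obstacle_set p \<psi>. energy G p u) \<le> cpG G powr p"
proof -
  \<comment> \<open>The hypothesis on x0 only excludes trivial obstacles; the upper bound does not need it.\<close>
  have "(G has_real_derivative deriv G x) (at x)" for x
    using G_smooth[rule_format, of 0 x] by (simp add: DERIV_deriv_iff_real_differentiable)
  moreover have "isCont (deriv G) x" for x
    using G_smooth[rule_format, of 1 x] by (simp add: differentiable_imp_continuous_within)
  ultimately interpret odd_C1_increasing G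
    using G_pos G_odd by unfold_locales (auto simp: continuous_at_imp_continuous_on)
  define L where "L = Sup (range G)"
  have bdd: "bdd_above (range G)"
    using le_integral_mult_deriv[OF G_L1] by (intro bdd_aboveI) auto
  have cpG: "cpG G = 2 * L"
    unfolding cpG_def L_def using tendsto_Sup_range[OF bdd] by (simp add: tendsto_Lim)
  have le_L: "G x \<le> L" for x
    unfolding L_def using bdd by (rule cSUP_upper[OF UNIV_I])
  obtain a where a: "0 < a" "\<And>x. x \<in> {0..1} \<Longrightarrow> x < a \<or> 1 - a < x \<Longrightarrow> \<psi> x < 0"
    using negative_near_endpoints[OF psi_cont psi0 psi1] by blast
  obtain x1 where x1: "\<forall>x\<in>{0..1}. \<psi> x \<le> \<psi> x1"
    using continuous_attains_sup[OF compact_Icc _ psi_cont] by auto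
  have "(INF u\<in>obstacle_set p \<psi>. energy G p u) \<le> (2 * L) powr p"
    by (rule INF_energy_le[OF _ le_L a(1)]) (use hp a(2) x1 in \<open>auto intro: less_imp_le\<close>)
  then show ?thesis
    by (simp add: cpG)
qed

end
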